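(* Let $\mathfrak{A} = (A; \mathcal{I})$ be a countable structure and $T$ a first-order theory consisting of $\Pi_2$ sentences, both over the same signature $\sigma$. Then either $|\mathrm{Sub}(\mathfrak{A}, T)| \leq \aleph_0$ or $|\mathrm{Sub}(\mathfrak{A}, T)| = 2^{\aleph_0}$.
   Context: $\mathrm{Sub}(\mathfrak A,T)$ is the set of all substructures $\mathfrak B$ of $\mathfrak A$ with $\mathfrak B\models T$. A structure $(A;\mathcal I)$, where $\mathcal I$ interprets the signature $\mathrm{dom}(\mathcal I)$, is countable iff $\max\{|A|,|\mathcal I|\}$ is countable. *)

theory Defs
  imports Main "HOL-Library.Countable_Set" "HOL-Library.Equipollence" Complex_Main
begin

text \<open>Constants are 0-ary function symbols.\<close>

datatype 'f trm = Var nat | Fun 'f "'f trm list"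

datatype ('f, 'r) fm =
    Eq "'f trm" "'f trm"
  | Rel 'r "'f trm list"
  | Neg "('f, 'r) fm"
  | Conj "('f, 'r) fm" "('f, 'r) fm"
  | Disj "('f, 'r) fm" "('f, 'r) fm"
  | Ex nat "('f, 'r) fm"
  | All nat "('f, 'r) fm"

fun wf_trm :: "('f \<Rightarrow> nat) \<Rightarrow> 'f trm \<Rightarrow> bool" where
  "wf_trm arF (Var x) = True"
| "wf_trm arF (Fun f ts) = (length ts = arF f \<and> (\<forall>t\<in>set ts. wf_trm arF t))"

fun wf_fm :: "('f \<Rightarrow> nat) \<Rightarrow> ('r \<Rightarrow> nat) \<Rightarrow> ('f, 'r) fm \<Rightarrow> bool" where
  "wf_fm arF arR (Eq s t) = (wf_trm arF s \<and> wf_trm arF t)"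
| "wf_fm arF arR (Rel r ts) = (length ts = arR r \<and> (\<forall>t\<in>set ts. wf_trm arF t))"
| "wf_fm arF arR (Neg p) = wf_fm arF arR p"
| "wf_fm arF arR (Conj p q) = (wf_fm arF arR p \<and> wf_fm arF arR q)"
| "wf_fm arF arR (Disj p q) = (wf_fm arF arR p \<and> wf_fm arF arR q)"
| "wf_fm arF arR (Ex x p) = wf_fm arF arR p"
| "wf_fm arF arR (All x p) = wf_fm arF arR p"

fun fv_trm :: "'f trm \<Rightarrow> nat set" where
  "fv_trm (Var x) = {x}"
| "fv_trm (Fun f ts) = (\<Union>t\<in>set ts. fv_trm t)"

fun fv :: "('f, 'r) fm \<Rightarrow> nat set" where
  "fv (Eq s t) = fv_trm s \<union> fv_trm t"
| "fv (Rel r ts) = (\<Union>t\<in>set ts. fv_trm t)"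
| "fv (Neg p) = fv p"
| "fv (Conj p q) = fv p \<union> fv q"
| "fv (Disj p q) = fv p \<union> fv q"
| "fv (Ex x p) = fv p - {x}"
| "fv (All x p) = fv p - {x}"

definition sentence :: "('f, 'r) fm \<Rightarrow> bool" where
  "sentence p \<longleftrightarrow> fv p = {}"

fun qfree :: "('f, 'r) fm \<Rightarrow> bool" where
  "qfree (Eq s t) = True"
| "qfree (Rel r ts) = True"
| "qfree (Neg p) = qfree p"
| "qfree (Conj p q) = (qfree p \<and> qfree q)"
| "qfree (Disj p q) = (qfree p \<and> qfree q)"
| "qfree (Ex x p) = False"
| "qfree (All x p) = False"

inductive is_Sigma1 :: "('f, 'r) fm \<Rightarrow> bool" where
  "qfree p \<Longrightarrow> is_Sigma1 p"
| "is_Sigma1 p \<Longrightarrow> is_Sigma1 (Ex x p)"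

inductive is_Pi2 :: "('f, 'r) fm \<Rightarrow> bool" where
  "is_Sigma1 p \<Longrightarrow> is_Pi2 p"
| "is_Pi2 p \<Longrightarrow> is_Pi2 (All x p)"

fun eval :: "('f \<Rightarrow> 'u list \<Rightarrow> 'u) \<Rightarrow> (nat \<Rightarrow> 'u) \<Rightarrow> 'f trm \<Rightarrow> 'u" where
  "eval Fi e (Var x) = e x"
| "eval Fi e (Fun f ts) = Fi f (map (eval Fi e) ts)"

fun sat :: "'u set \<Rightarrow> ('f \<Rightarrow> 'u list \<Rightarrow> 'u) \<Rightarrow> ('r \<Rightarrow> 'u list \<Rightarrow> bool)
             \<Rightarrow> (nat \<Rightarrow> 'u) \<Rightarrow> ('f, 'r) fm \<Rightarrow> bool" where
  "sat D Fi Ri e (Eq s t) = (eval Fi e s = eval Fi e t)"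
| "sat D Fi Ri e (Rel r ts) = Ri r (map (eval Fi e) ts)"
| "sat D Fi Ri e (Neg p) = (\<not> sat D Fi Ri e p)"
| "sat D Fi Ri e (Conj p q) = (sat D Fi Ri e p \<and> sat D Fi Ri e q)"
| "sat D Fi Ri e (Disj p q) = (sat D Fi Ri e p \<or> sat D Fi Ri e q)"
| "sat D Fi Ri e (Ex x p) = (\<exists>a\<in>D. sat D Fi Ri (e(x := a)) p)"
| "sat D Fi Ri e (All x p) = (\<forall>a\<in>D. sat D Fi Ri (e(x := a)) p)"

definition closed_dom :: "('f \<Rightarrow> nat) \<Rightarrow> 'u set \<Rightarrow> ('f \<Rightarrow> 'u list \<Rightarrow> 'u) \<Rightarrow> bool" where
  "closed_dom arF D Fi \<longleftrightarrow>
     D \<noteq> {} \<and> (\<forall>f xs. set xs \<subseteq> D \<and> length xs = arF f \<longrightarrow> Fi f xs \<in> D)"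

definition is_structure :: "('f \<Rightarrow> nat) \<Rightarrow> 'u set \<Rightarrow> ('f \<Rightarrow> 'u list \<Rightarrow> 'u) \<Rightarrow> bool" where
  "is_structure arF A Fi \<longleftrightarrow> closed_dom arF A Fi"

definition models :: "'u set \<Rightarrow> ('f \<Rightarrow> 'u list \<Rightarrow> 'u) \<Rightarrow> ('r \<Rightarrow> 'u list \<Rightarrow> bool)
                       \<Rightarrow> ('f, 'r) fm set \<Rightarrow> bool" where
  "models D Fi Ri T \<longleftrightarrow> (\<forall>p\<in>T. \<forall>e. range e \<subseteq> D \<longrightarrow> sat D Fi Ri e p)"

text \<open>A substructure is
  determined by its (nonempty, closed) domain B; its interpretations are the
  restrictions of Fi, Ri to B, which is what sat over B with Fi, Ri computes.\<close>
definition Sub :: "('f \<Rightarrow> nat) \<Rightarrow> 'u set \<Rightarrow> ('f \<Rightarrow> 'u list \<Rightarrow> 'u) \<Rightarrow> ('r \<Rightarrow> 'u list \<Rightarrow> bool)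
                   \<Rightarrow> ('f, 'r) fm set \<Rightarrow> 'u set set" where
  "Sub arF A Fi Ri T = {B. B \<subseteq> A \<and> closed_dom arF B Fi \<and> models B Fi Ri T}"

end

theory Submission
  imports
    Defs
    "HOL-Library.Product_Order"
    "HOL-Analysis.Finite_Cartesian_Product"
    "HOL-Analysis.Abstract_Topology_2"
begin

text \<open>View the subsets of the countable set A as the points of the Cantor space 2^A.
  Being nonempty, being closed under a basic function applied to a tuple from A, and, for a
  Pi_2 sentence \<forall>xs. \<exists>ys. \<phi> and a tuple a of parameters from A, satisfying
  "if a lies in B then B satisfies \<exists>ys. \<phi>(a, ys)" are all open conditions on B: the first two
  mention finitely many points, and a true Sigma_1 statement is witnessed by finitely many
  elements and persists to supersets. These are countably many conditions, so Sub(A, T) is a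
  G_delta subset of 2^A. An uncountable G_delta subset of 2^A contains a perfect set: the
  conditions whose cylinder meets it uncountably can be split into two incompatible such
  conditions again and again, and the branches of the resulting binary tree give 2^aleph_0
  distinct members.\<close>

section \<open>Perfect set property for G_delta sets of subsets\<close>

text \<open>A condition c = (P, N) requires the points of P and forbids those of N. Its cylinder is a
  basic open set of 2^A, and \<open>cantor_open A\<close> is openness in 2^A.\<close>

definition cylinder :: "'a set \<Rightarrow> 'a set \<times> 'a set \<Rightarrow> 'a set set" where
  "cylinder A c = {B. B \<subseteq> A \<and> fst c \<subseteq> B \<and> snd c \<inter> B = {}}"

definition finite_conditions :: "'a set \<Rightarrow> ('a set \<times> 'a set) set" where
  "finite_conditions A = {c. finite (fst c) \<and> finite (snd c) \<and> fst c \<subseteq> A \<and> snd c \<subseteq> A}"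

definition cantor_open :: "'a set \<Rightarrow> 'a set set \<Rightarrow> bool" where
  "cantor_open A U \<longleftrightarrow>
     (\<forall>B\<in>U. B \<subseteq> A \<longrightarrow> (\<exists>c. finite (fst c) \<and> finite (snd c) \<and> B \<in> cylinder A c \<and> cylinder A c \<subseteq> U))"

definition cantor_gdelta :: "'a set \<Rightarrow> 'a set set \<Rightarrow> bool" where
  "cantor_gdelta A F \<longleftrightarrow>
     (\<exists>\<U>. countable \<U> \<and> (\<forall>U\<in>\<U>. cantor_open A U) \<and> F = {B. B \<subseteq> A \<and> (\<forall>U\<in>\<U>. B \<in> U)})"

lemma countable_finite_conditions: "countable A \<Longrightarrow> countable (finite_conditions A)"
proof -
  assume "countable A"
  have "finite_conditions A = {P. finite P \<and> P \<subseteq> A} \<times> {N. finite N \<and> N \<subseteq> A}"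
    by (auto simp: finite_conditions_def)
  then show ?thesis
    using countable_Collect_finite_subset[OF \<open>countable A\<close>] by simp
qed

lemma cantor_open_UNIV: "cantor_open A UNIV"
  unfolding cantor_open_def cylinder_def by (intro ballI impI exI[of _ "({}, {})"]) auto

lemma cantor_open_refine:
  assumes "cantor_open A U" "X \<in> U" "X \<in> cylinder A c" "c \<in> finite_conditions A"
  obtains c' where "c \<le> c'" "c' \<in> finite_conditions A" "X \<in> cylinder A c'" "cylinder A c' \<subseteq> U"
proof -
  have "X \<subseteq> A"
    using assms(3) by (simp add: cylinder_def)
  then obtain d where d: "finite (fst d)" "finite (snd d)" "X \<in> cylinder A d" "cylinder A d \<subseteq> U"
    using assms(1,2) unfolding cantor_open_def by blast
  let ?c' = "(fst c \<union> fst d, snd c \<union> (snd d \<inter> A))"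
  have "cylinder A ?c' \<subseteq> cylinder A d"
    by (auto simp: cylinder_def)
  moreover have "?c' \<in> finite_conditions A" "X \<in> cylinder A ?c'"
    using assms(3,4) d \<open>X \<subseteq> A\<close> by (auto simp: finite_conditions_def cylinder_def)
  ultimately show thesis
    using that[of ?c'] d(4) by (auto simp: less_eq_prod_def)
qed

lemma cantor_gdelta_sequence:
  assumes "cantor_gdelta A F"
  obtains u :: "nat \<Rightarrow> 'a set set"
  where "\<And>n. cantor_open A (u n)" "F = {B. B \<subseteq> A \<and> (\<forall>n. B \<in> u n)}"
proof -
  obtain \<U> where \<U>: "countable \<U>" "\<forall>U\<in>\<U>. cantor_open A U"
    and F: "F = {B. B \<subseteq> A \<and> (\<forall>U\<in>\<U>. B \<in> U)}"
    using assms unfolding cantor_gdelta_def by blast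
  define u where "u = from_nat_into (insert UNIV \<U>)"
  have range_u: "range u = insert UNIV \<U>"
    unfolding u_def using \<U>(1) by simp
  have "cantor_open A (u n)" for n
  proof -
    have "u n \<in> insert UNIV \<U>"
      using range_u by blast
    then show ?thesis
      using \<U>(2) by (auto simp: cantor_open_UNIV)
  qed
  moreover have "(\<forall>n. B \<in> u n) \<longleftrightarrow> (\<forall>U\<in>range u. B \<in> U)" for B
    by blast
  then have "F = {B. B \<subseteq> A \<and> (\<forall>n. B \<in> u n)}"
    using F range_u by simp
  ultimately show thesis
    using that by blast
qed

definition condensation_points :: "'a set \<Rightarrow> 'a set set \<Rightarrow> 'a set set" where
  "condensation_points A F =
     {X\<in>F. \<forall>c\<in>finite_conditions A. X \<in> cylinder A c \<longrightarrow> uncountable (cylinder A c \<inter> F)}"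

definition rich_condition :: "'a set \<Rightarrow> 'a set set \<Rightarrow> 'a set \<times> 'a set \<Rightarrow> bool" where
  "rich_condition A F c \<longleftrightarrow> c \<in> finite_conditions A \<and> uncountable (cylinder A c \<inter> F)"

lemma countable_non_condensation_points:
  assumes "countable A"
  shows "countable (F - condensation_points A F)"
proof -
  have "countable (\<Union>c\<in>{c\<in>finite_conditions A. countable (cylinder A c \<inter> F)}. cylinder A c \<inter> F)"
    using countable_finite_conditions[OF assms] by (intro countable_UN) auto
  then show ?thesis
    by (rule countable_subset[rotated]) (auto simp: condensation_points_def)
qed

lemma rich_condition_disjoint:
  assumes "rich_condition A F c"
  shows "fst c \<subseteq> A \<and> fst c \<inter> snd c = {}"
proof -
  from assms obtain B where "B \<in> cylinder A c"
    unfolding rich_condition_def by (metis countable_empty IntD1 equals0I)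
  then show ?thesis
    by (auto simp: cylinder_def)
qed

lemma rich_condition_refine:
  assumes "X \<in> condensation_points A F" "cantor_open A U" "X \<in> U"
    and "X \<in> cylinder A c" "c \<in> finite_conditions A"
  obtains c' where "rich_condition A F c'" "c \<le> c'" "cylinder A c' \<subseteq> U"
proof -
  obtain c' where "c \<le> c'" "c' \<in> finite_conditions A" "X \<in> cylinder A c'" "cylinder A c' \<subseteq> U"
    using cantor_open_refine[OF assms(2-5)] .
  moreover from assms(1) this(2,3) have "rich_condition A F c'"
    by (simp add: condensation_points_def rich_condition_def)
  ultimately show thesis
    using that by blast
qed

lemma rich_condition_split:
  assumes "countable A" "cantor_open A U" "F \<subseteq> U" "rich_condition A F c"
  obtains c1 c2 where "rich_condition A F c1" "rich_condition A F c2" "c \<le> c1" "c \<le> c2"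
    "cylinder A c1 \<subseteq> U" "cylinder A c2 \<subseteq> U" "fst c1 \<inter> snd c2 \<noteq> {}"
proof -
  let ?S = "cylinder A c \<inter> condensation_points A F"
  have "cylinder A c \<inter> F \<subseteq> ?S \<union> (F - condensation_points A F)"
    by (auto simp: condensation_points_def)
  then have uncountable: "uncountable ?S"
    using assms(4) countable_non_condensation_points[OF assms(1)]
    unfolding rich_condition_def by (meson countable_Un countable_subset)
  then obtain X where X: "X \<in> ?S"
    by (metis countable_empty equals0I)
  moreover have "?S \<noteq> {X}"
    using uncountable by auto
  ultimately obtain Y where Y: "Y \<in> ?S" "X \<noteq> Y"
    by blast
  then obtain a where "(a \<in> X) \<noteq> (a \<in> Y)"
    by (meson set_eqI)
  then obtain X' Y' where XY: "X' \<in> ?S" "Y' \<in> ?S" "a \<in> X'" "a \<notin> Y'"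
    using X Y(1) by metis
  let ?c1 = "(insert a (fst c), snd c)" and ?c2 = "(fst c, insert a (snd c))"
  have c12: "?c1 \<in> finite_conditions A" "?c2 \<in> finite_conditions A"
    using XY assms(4) by (auto simp: rich_condition_def finite_conditions_def cylinder_def)
  have XY_cylinder: "X' \<in> cylinder A ?c1" "Y' \<in> cylinder A ?c2"
    using XY by (auto simp: cylinder_def)
  have XY_points: "X' \<in> condensation_points A F" "Y' \<in> condensation_points A F"
    using XY by blast+
  then have XY_U: "X' \<in> U" "Y' \<in> U"
    using assms(3) by (auto simp: condensation_points_def)
  obtain c1 where "rich_condition A F c1" "?c1 \<le> c1" "cylinder A c1 \<subseteq> U"
    by (rule rich_condition_refine[OF XY_points(1) assms(2) XY_U(1) XY_cylinder(1) c12(1)])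
  moreover obtain c2 where "rich_condition A F c2" "?c2 \<le> c2" "cylinder A c2 \<subseteq> U"
    by (rule rich_condition_refine[OF XY_points(2) assms(2) XY_U(2) XY_cylinder(2) c12(2)])
  moreover have "c \<le> c1" "c \<le> c2" "fst c1 \<inter> snd c2 \<noteq> {}"
    using calculation by (auto simp: less_eq_prod_def)
  ultimately show thesis
    using that by blast
qed

locale cantor_scheme =
  fixes A :: "'a set" and good :: "'a set \<times> 'a set \<Rightarrow> bool"
    and sp :: "nat \<Rightarrow> 'a set \<times> 'a set \<Rightarrow> ('a set \<times> 'a set) \<times> ('a set \<times> 'a set)"
  assumes good_root: "good ({}, {})"
    and good_disjoint: "good c \<Longrightarrow> fst c \<subseteq> A \<and> fst c \<inter> snd c = {}"
    and good_sp: "good c \<Longrightarrow> good (fst (sp n c)) \<and> good (snd (sp n c))"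
    and le_sp: "good c \<Longrightarrow> c \<le> fst (sp n c) \<and> c \<le> snd (sp n c)"
    and sp_separates: "good c \<Longrightarrow> fst (fst (sp n c)) \<inter> snd (snd (sp n c)) \<noteq> {}"
begin

primrec node :: "nat set \<Rightarrow> nat \<Rightarrow> 'a set \<times> 'a set" where
  "node \<alpha> 0 = ({}, {})"
| "node \<alpha> (Suc k) = (if k \<in> \<alpha> then fst else snd) (sp k (node \<alpha> k))"

definition branch :: "nat set \<Rightarrow> 'a set" where
  "branch \<alpha> = (\<Union>k. fst (node \<alpha> k))"

lemma good_node: "good (node \<alpha> k)"
  by (induction k) (use good_root good_sp in auto)

lemma node_mono: "k \<le> m \<Longrightarrow> node \<alpha> k \<le> node \<alpha> m"
  by (rule lift_Suc_mono_le[of "node \<alpha>"]) (use le_sp good_node in auto)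

lemma node_eqI: "(\<And>i. i < n \<Longrightarrow> i \<in> \<alpha> \<longleftrightarrow> i \<in> \<beta>) \<Longrightarrow> node \<alpha> n = node \<beta> n"
  by (induction n) auto

lemma branch_in_cylinder: "branch \<alpha> \<in> cylinder A (node \<alpha> k)"
proof -
  have "snd (node \<alpha> k) \<inter> fst (node \<alpha> m) = {}" for m
  proof -
    have "node \<alpha> k \<le> node \<alpha> (max k m)" "node \<alpha> m \<le> node \<alpha> (max k m)"
      by (simp_all add: node_mono)
    then show ?thesis
      using good_disjoint[OF good_node[of \<alpha> "max k m"]] by (auto simp: less_eq_prod_def)
  qed
  moreover have "fst (node \<alpha> m) \<subseteq> A" for m
    using good_disjoint[OF good_node] by blast
  ultimately show ?thesis
    by (auto simp: branch_def cylinder_def)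
qed

lemma branch_separated:
  assumes "n \<in> \<alpha>" "n \<notin> \<beta>" "\<And>i. i < n \<Longrightarrow> i \<in> \<alpha> \<longleftrightarrow> i \<in> \<beta>"
  shows "branch \<alpha> \<noteq> branch \<beta>"
proof -
  define c where "c = node \<alpha> n"
  have "node \<beta> n = c"
    unfolding c_def by (metis assms(3) node_eqI)
  then have "node \<alpha> (Suc n) = fst (sp n c)" "node \<beta> (Suc n) = snd (sp n c)"
    using assms(1,2) by (simp_all add: c_def)
  moreover obtain a where "a \<in> fst (fst (sp n c))" "a \<in> snd (snd (sp n c))"
    using sp_separates[OF good_node] c_def by blast
  ultimately show ?thesis
    using branch_in_cylinder[of \<alpha> "Suc n"] branch_in_cylinder[of \<beta> "Suc n"]
    by (auto simp: cylinder_def)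
qed

lemma inj_branch: "inj branch"
proof (rule injI, rule ccontr)
  fix \<alpha> \<beta> assume "branch \<alpha> = branch \<beta>" "\<alpha> \<noteq> \<beta>"
  then obtain n where "(n \<in> \<alpha>) \<noteq> (n \<in> \<beta>)" "\<And>i. i < n \<Longrightarrow> i \<in> \<alpha> \<longleftrightarrow> i \<in> \<beta>"
    using exists_least_iff[of "\<lambda>n. (n \<in> \<alpha>) \<noteq> (n \<in> \<beta>)"] by blast
  then show False
    using branch_separated[of n \<alpha> \<beta>] branch_separated[of n \<beta> \<alpha>] \<open>branch \<alpha> = branch \<beta>\<close> by auto
qed

end

theorem cantor_gdelta_perfect_set:
  assumes "countable A" "cantor_gdelta A F" "uncountable F"
  shows "(UNIV :: nat set set) \<lesssim> F"
proof -
  obtain u :: "nat \<Rightarrow> 'a set set"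
    where open_u: "\<And>n. cantor_open A (u n)" and F: "F = {B. B \<subseteq> A \<and> (\<forall>n. B \<in> u n)}"
    using cantor_gdelta_sequence[OF assms(2)] by blast
  define splits where "splits n c s \<longleftrightarrow>
      rich_condition A F (fst s) \<and> rich_condition A F (snd s) \<and> c \<le> fst s \<and> c \<le> snd s \<and>
      cylinder A (fst s) \<subseteq> u n \<and> cylinder A (snd s) \<subseteq> u n \<and> fst (fst s) \<inter> snd (snd s) \<noteq> {}"
    for n c s
  have splits_exists: "\<exists>s. splits n c s" if rich: "rich_condition A F c" for n c
  proof -
    have "F \<subseteq> u n"
      using F by blast
    obtain c1 c2 where "rich_condition A F c1" "rich_condition A F c2" "c \<le> c1" "c \<le> c2"
      "cylinder A c1 \<subseteq> u n" "cylinder A c2 \<subseteq> u n" "fst c1 \<inter> snd c2 \<noteq> {}"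
      by (rule rich_condition_split[OF assms(1) open_u \<open>F \<subseteq> u n\<close> rich])
    then show ?thesis
      unfolding splits_def by (intro exI[of _ "(c1, c2)"]) simp
  qed
  define sp where "sp n c = (SOME s. splits n c s)" for n c
  have sp: "splits n c (sp n c)" if "rich_condition A F c" for n c
    unfolding sp_def using splits_exists[OF that] by (rule someI_ex)
  have "rich_condition A F ({}, {})"
    using assms(3) F
    by (simp add: rich_condition_def finite_conditions_def cylinder_def Int_absorb1 subset_eq)
  then interpret cantor_scheme A "rich_condition A F" sp
    by unfold_locales (simp_all add: sp[unfolded splits_def] rich_condition_disjoint)
  have "branch \<alpha> \<in> F" for \<alpha>
  proof -
    have "cylinder A (node \<alpha> (Suc n)) \<subseteq> u n" for n
      using sp[OF good_node[of \<alpha> n]] by (simp add: splits_def)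
    then have "branch \<alpha> \<in> u n" for n
      using branch_in_cylinder[of \<alpha> "Suc n"] by blast
    moreover have "branch \<alpha> \<subseteq> A"
      using branch_in_cylinder[of \<alpha> 0] by (simp add: cylinder_def)
    ultimately show ?thesis
      using F by blast
  qed
  then show ?thesis
    unfolding lepoll_def using inj_branch by blast
qed

lemma eqpoll_reals_if_nat_sets_lepoll:
  assumes "countable A" "F \<subseteq> Pow A" "(UNIV :: nat set set) \<lesssim> F"
  shows "F \<approx> (UNIV :: real set)"
proof -
  have "inj_on (image (to_nat_on A)) F"
    using inj_on_image_Pow[OF inj_on_to_nat_on[OF assms(1)]] assms(2) by (rule inj_on_subset)
  then have "F \<lesssim> (UNIV :: nat set set)"
    unfolding lepoll_def by blast
  then have "F \<approx> (UNIV :: nat set set)"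
    using assms(3) by (rule lepoll_antisym)
  then show ?thesis
    using nat_sets_eqpoll_reals by (rule eqpoll_trans)
qed

theorem cantor_gdelta_countable_or_continuum:
  assumes "countable A" "cantor_gdelta A F"
  shows "countable F \<or> F \<approx> (UNIV :: real set)"
proof -
  have "F \<subseteq> Pow A"
    using assms(2) by (auto simp: cantor_gdelta_def)
  then show ?thesis
    using cantor_gdelta_perfect_set[OF assms] eqpoll_reals_if_nat_sets_lepoll[OF assms(1)]
    by blast
qed

section \<open>Substructures satisfying Pi_2 sentences\<close>

instance trm :: (countable) countable
  by countable_datatype

instance fm :: (countable, countable) countable
  by countable_datatype

lemma countable_UNIV_fm:
  assumes "countable (UNIV :: 'f set)" "countable (UNIV :: 'r set)"
  shows "countable (UNIV :: ('f, 'r) fm set)"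
proof -
  have "inj (map_fm (to_nat_on (UNIV :: 'f set)) (to_nat_on (UNIV :: 'r set)))"
    by (intro fm.inj_map inj_on_to_nat_on assms)
  then show ?thesis
    by (rule countable_image_inj_on[rotated]) simp
qed

lemma finite_fv_trm: "finite (fv_trm t)"
  by (induction t) auto

lemma finite_fv: "finite (fv p)"
  by (induction p) (auto simp: finite_fv_trm)

lemma eval_cong: "(\<And>x. x \<in> fv_trm t \<Longrightarrow> e x = e' x) \<Longrightarrow> eval Fi e t = eval Fi e' t"
proof (induction t)
  case (Fun f ts)
  then have "map (eval Fi e) ts = map (eval Fi e') ts"
    by (intro map_cong) auto
  then show ?case
    by (simp only: eval.simps)
qed simp

lemma sat_cong: "(\<And>x. x \<in> fv p \<Longrightarrow> e x = e' x) \<Longrightarrow> sat D Fi Ri e p = sat D Fi Ri e' p"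
proof (induction p arbitrary: e e')
  case (Eq s t)
  then show ?case
    using eval_cong[of s e e' Fi] eval_cong[of t e e' Fi] by simp
next
  case (Rel r ts)
  then have "map (eval Fi e) ts = map (eval Fi e') ts"
    by (intro map_cong refl eval_cong) auto
  then show ?case
    by (simp only: sat.simps)
next
  case (Ex x p)
  have "sat D Fi Ri (e(x := a)) p = sat D Fi Ri (e'(x := a)) p" for a
    using Ex.prems by (intro Ex.IH) auto
  then show ?case
    by simp
next
  case (All x p)
  have "sat D Fi Ri (e(x := a)) p = sat D Fi Ri (e'(x := a)) p" for a
    using All.prems by (intro All.IH) auto
  then show ?case
    by simp
next
  case (Neg p)
  show ?case
    using Neg.prems Neg.IH[of e e'] by simp
next
  case (Conj p q)
  show ?case
    using Conj.prems Conj.IH[of e e'] by simp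
next
  case (Disj p q)
  show ?case
    using Disj.prems Disj.IH[of e e'] by simp
qed

lemma sat_qfree_indep_domain: "qfree p \<Longrightarrow> sat D Fi Ri e p = sat D' Fi Ri e p"
  by (induction p) auto

lemma sat_Sigma1_finitely_witnessed:
  "is_Sigma1 p \<Longrightarrow> sat B Fi Ri e p \<Longrightarrow> \<exists>P\<subseteq>B. finite P \<and> (\<forall>B'. P \<subseteq> B' \<longrightarrow> sat B' Fi Ri e p)"
proof (induction p arbitrary: e rule: is_Sigma1.induct)
  case (1 p)
  then have "sat B' Fi Ri e p" for B'
    using sat_qfree_indep_domain[of p B Fi Ri e B'] by simp
  then show ?case
    by (intro exI[of _ "{}"]) simp
next
  case (2 p x)
  from "2.prems" obtain a where "a \<in> B" "sat B Fi Ri (e(x := a)) p"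
    by auto
  then obtain P where "P \<subseteq> B" "finite P" "\<forall>B'. P \<subseteq> B' \<longrightarrow> sat B' Fi Ri (e(x := a)) p"
    using "2.IH" by meson
  with \<open>a \<in> B\<close> show ?case
    by (intro exI[of _ "insert a P"]) auto
qed

lemma cantor_open_Sigma1: "is_Sigma1 p \<Longrightarrow> cantor_open A {B. sat B Fi Ri e p}"
  unfolding cantor_open_def
proof (intro ballI impI)
  fix B assume "is_Sigma1 p" "B \<in> {B. sat B Fi Ri e p}" "B \<subseteq> A"
  then obtain P where "P \<subseteq> B" "finite P" "\<forall>B'. P \<subseteq> B' \<longrightarrow> sat B' Fi Ri e p"
    using sat_Sigma1_finitely_witnessed[of p B Fi Ri e] by auto
  with \<open>B \<subseteq> A\<close> show "\<exists>c. finite (fst c) \<and> finite (snd c) \<and> B \<in> cylinder A c \<and>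
      cylinder A c \<subseteq> {B. sat B Fi Ri e p}"
    by (intro exI[of _ "(P, {})"]) (auto simp: cylinder_def)
qed

lemma cantor_open_mem: "cantor_open A {B. y \<in> B}"
  unfolding cantor_open_def cylinder_def by (intro ballI impI exI[of _ "({y}, {})"]) auto

lemma cantor_open_nonempty: "cantor_open A {B. B \<noteq> {}}"
  unfolding cantor_open_def
proof (intro ballI impI)
  fix B assume "B \<in> {B. B \<noteq> {}}" "B \<subseteq> A"
  then obtain b where "b \<in> B"
    by blast
  with \<open>B \<subseteq> A\<close> have "B \<in> cylinder A ({b}, {})" "cylinder A ({b}, {}) \<subseteq> {B. B \<noteq> {}}"
    by (auto simp: cylinder_def)
  then show "\<exists>c. finite (fst c) \<and> finite (snd c) \<and> B \<in> cylinder A c \<and> cylinder A c \<subseteq> {B. B \<noteq> {}}"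
    by (intro exI[of _ "({b}, {})"]) simp
qed

lemma cantor_open_imp:
  assumes "finite P" "cantor_open A U"
  shows "cantor_open A {B. P \<subseteq> B \<longrightarrow> B \<in> U}"
  unfolding cantor_open_def
proof (intro ballI impI)
  fix B assume B: "B \<in> {B. P \<subseteq> B \<longrightarrow> B \<in> U}" "B \<subseteq> A"
  show "\<exists>c. finite (fst c) \<and> finite (snd c) \<and> B \<in> cylinder A c \<and>
      cylinder A c \<subseteq> {B. P \<subseteq> B \<longrightarrow> B \<in> U}"
  proof (cases "P \<subseteq> B")
    case True
    with B have "B \<in> U"
      by blast
    then obtain c where "finite (fst c)" "finite (snd c)" "B \<in> cylinder A c" "cylinder A c \<subseteq> U"
      using assms(2) B(2) unfolding cantor_open_def by blast
    then show ?thesis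
      by (intro exI[of _ c]) auto
  next
    case False
    then obtain a where "a \<in> P" "a \<notin> B"
      by blast
    with B(2) show ?thesis
      by (intro exI[of _ "({}, {a})"]) (auto simp: cylinder_def)
  qed
qed

text \<open>Since \<open>models\<close> ranges over all assignments, leading universal quantifiers can be dropped.\<close>

fun strip_All :: "('f, 'r) fm \<Rightarrow> ('f, 'r) fm" where
  "strip_All (All x p) = strip_All p"
| "strip_All p = p"

lemma strip_All_Sigma1: "is_Sigma1 p \<Longrightarrow> strip_All p = p"
proof (induction rule: is_Sigma1.induct)
  case (1 p)
  then show ?case
    by (cases p) simp_all
qed simp

lemma is_Sigma1_strip_All: "is_Pi2 p \<Longrightarrow> is_Sigma1 (strip_All p)"
  by (induction rule: is_Pi2.induct) (simp_all add: strip_All_Sigma1)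

lemma models_All:
  fixes B :: "'u set"
  shows "models B Fi Ri {All x p} \<longleftrightarrow> models B Fi Ri {p}"
proof
  assume models: "models B Fi Ri {All x p}"
  show "models B Fi Ri {p}"
    unfolding models_def
  proof (intro ballI allI impI)
    fix q and e :: "nat \<Rightarrow> 'u" assume "q \<in> {p}" "range e \<subseteq> B"
    with models have "\<forall>a\<in>B. sat B Fi Ri (e(x := a)) p"
      by (simp add: models_def)
    moreover have "e x \<in> B"
      using \<open>range e \<subseteq> B\<close> by blast
    ultimately have "sat B Fi Ri (e(x := e x)) p"
      by blast
    with \<open>q \<in> {p}\<close> show "sat B Fi Ri e q"
      by simp
  qed
next
  assume "models B Fi Ri {p}"
  then show "models B Fi Ri {All x p}"
    unfolding models_def by (auto simp: image_subset_iff)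
qed

lemma models_strip_All: "models B Fi Ri {strip_All p} \<longleftrightarrow> models B Fi Ri {p}"
  by (induction p rule: strip_All.induct) (simp_all add: models_All)

lemma models_singleton_iff:
  assumes "b \<in> B"
  shows "models B Fi Ri {p} \<longleftrightarrow> (\<forall>e. e ` fv p \<subseteq> B \<longrightarrow> sat B Fi Ri e p)"
proof
  assume models: "models B Fi Ri {p}"
  show "\<forall>e. e ` fv p \<subseteq> B \<longrightarrow> sat B Fi Ri e p"
  proof (intro allI impI)
    fix e assume "e ` fv p \<subseteq> B"
    define e' where "e' v = (if v \<in> fv p then e v else b)" for v
    have "range e' \<subseteq> B"
      using \<open>e ` fv p \<subseteq> B\<close> assms by (auto simp: e'_def)
    with models have "sat B Fi Ri e' p"
      by (simp add: models_def)
    moreover have "sat B Fi Ri e' p = sat B Fi Ri e p"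
      by (rule sat_cong) (simp add: e'_def)
    ultimately show "sat B Fi Ri e p"
      by simp
  qed
qed (auto simp: models_def)

text \<open>Assignments are restricted to A only to make the family of conditions countable.\<close>

definition instance_conditions ::
    "'u set \<Rightarrow> ('f \<Rightarrow> 'u list \<Rightarrow> 'u) \<Rightarrow> ('r \<Rightarrow> 'u list \<Rightarrow> bool) \<Rightarrow> ('f, 'r) fm \<Rightarrow> 'u set set set" where
  "instance_conditions A Fi Ri p = (\<lambda>e. {B. e ` fv p \<subseteq> B \<longrightarrow> sat B Fi Ri e p}) ` {e. e ` fv p \<subseteq> A}"

lemma countable_instance_conditions:
  assumes "countable A"
  shows "countable (instance_conditions A Fi Ri p)"
proof -
  let ?cond = "\<lambda>e. {B. e ` fv p \<subseteq> B \<longrightarrow> sat B Fi Ri e p}"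
  have "instance_conditions A Fi Ri p \<subseteq> ?cond ` (fv p \<rightarrow>\<^sub>E A)"
  proof
    fix U assume "U \<in> instance_conditions A Fi Ri p"
    then obtain e where e: "e ` fv p \<subseteq> A" "U = ?cond e"
      unfolding instance_conditions_def by blast
    have "sat B Fi Ri (restrict e (fv p)) p = sat B Fi Ri e p" for B
      by (rule sat_cong) simp
    then have "?cond e = ?cond (restrict e (fv p))"
      by simp
    moreover have "restrict e (fv p) \<in> fv p \<rightarrow>\<^sub>E A"
      using e(1) by auto
    ultimately show "U \<in> ?cond ` (fv p \<rightarrow>\<^sub>E A)"
      using e(2) by blast
  qed
  moreover have "countable (fv p \<rightarrow>\<^sub>E A)"
    using finite_fv assms by (rule countable_PiE)
  ultimately show ?thesis
    by (meson countable_image countable_subset)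
qed

lemma models_iff_instance_conditions:
  assumes "B \<subseteq> A" "B \<noteq> {}"
  shows "models B Fi Ri {p} \<longleftrightarrow> (\<forall>U\<in>instance_conditions A Fi Ri p. B \<in> U)"
proof -
  obtain b where "b \<in> B"
    using assms(2) by blast
  then have "models B Fi Ri {p} \<longleftrightarrow> (\<forall>e. e ` fv p \<subseteq> B \<longrightarrow> sat B Fi Ri e p)"
    by (rule models_singleton_iff)
  also have "\<dots> \<longleftrightarrow> (\<forall>e. e ` fv p \<subseteq> A \<longrightarrow> e ` fv p \<subseteq> B \<longrightarrow> sat B Fi Ri e p)"
    using assms(1) by (meson subset_trans)
  also have "\<dots> \<longleftrightarrow> (\<forall>U\<in>instance_conditions A Fi Ri p. B \<in> U)"
    unfolding instance_conditions_def by simp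
  finally show ?thesis .
qed

lemma cantor_open_instance_conditions:
  assumes "is_Sigma1 p" "U \<in> instance_conditions A Fi Ri p"
  shows "cantor_open A U"
proof -
  obtain e where "U = {B. e ` fv p \<subseteq> B \<longrightarrow> B \<in> {B. sat B Fi Ri e p}}"
    using assms(2) unfolding instance_conditions_def by blast
  then show ?thesis
    using cantor_open_imp[OF finite_imageI[OF finite_fv] cantor_open_Sigma1[OF assms(1)]] by simp
qed

definition closure_conditions :: "('f \<Rightarrow> nat) \<Rightarrow> 'u set \<Rightarrow> ('f \<Rightarrow> 'u list \<Rightarrow> 'u) \<Rightarrow> 'u set set set" where
  "closure_conditions arF A Fi =
     (\<lambda>(f, xs). {B. set xs \<subseteq> B \<longrightarrow> Fi f xs \<in> B}) ` {(f, xs). set xs \<subseteq> A \<and> length xs = arF f}"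

lemma countable_closure_conditions:
  assumes "countable A" "countable (UNIV :: 'f set)"
  shows "countable (closure_conditions arF A (Fi :: 'f \<Rightarrow> 'u list \<Rightarrow> 'u))"
proof -
  have "{(f, xs). set xs \<subseteq> A \<and> length xs = arF f} \<subseteq> (UNIV :: 'f set) \<times> lists A"
    by auto
  moreover have "countable ((UNIV :: 'f set) \<times> lists A)"
    using assms by (intro countable_SIGMA countable_lists) auto
  ultimately show ?thesis
    unfolding closure_conditions_def by (meson countable_image countable_subset)
qed

lemma closed_dom_iff_closure_conditions:
  assumes "B \<subseteq> A"
  shows "closed_dom arF B Fi \<longleftrightarrow> B \<noteq> {} \<and> (\<forall>U\<in>closure_conditions arF A Fi. B \<in> U)"
  using assms unfolding closed_dom_def closure_conditions_def by auto

lemma cantor_open_closure_conditions: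
  assumes "U \<in> closure_conditions arF A Fi"
  shows "cantor_open A U"
proof -
  obtain f xs where "U = {B. set xs \<subseteq> B \<longrightarrow> B \<in> {B. Fi f xs \<in> B}}"
    using assms unfolding closure_conditions_def by auto
  then show ?thesis
    using cantor_open_imp[OF finite_set cantor_open_mem] by simp
qed

lemma cantor_gdelta_Sub:
  fixes T :: "('f, 'r) fm set"
  assumes "countable A" "countable (UNIV :: 'f set)" "countable (UNIV :: 'r set)"
    and "\<forall>p\<in>T. is_Pi2 p"
  shows "cantor_gdelta A (Sub arF A Fi Ri T)"
proof -
  define \<U> where "\<U> = insert {B. B \<noteq> {}}
    (closure_conditions arF A Fi \<union> (\<Union>p\<in>T. instance_conditions A Fi Ri (strip_All p)))"
  have "countable T"
    using countable_UNIV_fm[OF assms(2,3)] by (rule countable_subset[rotated]) simp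
  then have "countable \<U>"
    unfolding \<U>_def using assms(1,2)
    by (intro countable_insert countable_Un countable_UN countable_closure_conditions
        countable_instance_conditions)
  moreover have "cantor_open A U" if "U \<in> \<U>" for U
  proof -
    from that consider "U = {B. B \<noteq> {}}" | "U \<in> closure_conditions arF A Fi"
      | p where "p \<in> T" "U \<in> instance_conditions A Fi Ri (strip_All p)"
      unfolding \<U>_def by blast
    then show ?thesis
    proof cases
      case 3
      with assms(4) show ?thesis
        by (metis cantor_open_instance_conditions is_Sigma1_strip_All)
    qed (simp_all add: cantor_open_nonempty cantor_open_closure_conditions)
  qed
  moreover have "B \<in> Sub arF A Fi Ri T \<longleftrightarrow> (\<forall>U\<in>\<U>. B \<in> U)" if "B \<subseteq> A" for B
  proof (cases "B = {}")
    case False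
    have "models B Fi Ri T \<longleftrightarrow> (\<forall>p\<in>T. models B Fi Ri {strip_All p})"
      unfolding models_strip_All unfolding models_def by blast
    with False that show ?thesis
      by (simp add: \<U>_def Sub_def closed_dom_iff_closure_conditions models_iff_instance_conditions)
        blast
  qed (simp add: \<U>_def Sub_def closed_dom_def)
  moreover have "Sub arF A Fi Ri T \<subseteq> Pow A"
    by (auto simp: Sub_def)
  ultimately show ?thesis
    unfolding cantor_gdelta_def by (intro exI[of _ \<U>]) blast
qed

theorem corollary5p63:
  fixes arF :: "'f \<Rightarrow> nat" and arR :: "'r \<Rightarrow> nat"
    and A :: "'u set" and Fi :: "'f \<Rightarrow> 'u list \<Rightarrow> 'u" and Ri :: "'r \<Rightarrow> 'u list \<Rightarrow> bool"
    and T :: "('f, 'r) fm set"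
  assumes "is_structure arF A Fi"
    and "countable A" and "countable (UNIV :: 'f set)" and "countable (UNIV :: 'r set)"
    and "\<forall>p\<in>T. wf_fm arF arR p \<and> sentence p \<and> is_Pi2 p"
  shows "countable (Sub arF A Fi Ri T) \<or> Sub arF A Fi Ri T \<approx> (UNIV :: real set)"
proof -
  have "cantor_gdelta A (Sub arF A Fi Ri T)"
    using assms(2-5) by (simp add: cantor_gdelta_Sub)
  with assms(2) show ?thesis
    by (rule cantor_gdelta_countable_or_continuum)
qed

end
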